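(* Let $k\to A$ be a homomorphism of noetherian rings and $M_1,M_2$ finitely generated $A$-modules, and let $\widetilde D:\mathcal J^N(M_1/k)\to M_2$ be an $A$-linear map for some $N\in\mathbb N_0$. (1) If $\operatorname{ann}(M_2)=I$, there is some $K\in\mathbb N$ such that $\widetilde D$ factors over a map $\widetilde{D'}:\mathcal J^N((M_1/I^KM_1)/k)\to M_2$ (through the natural surjection $\mathcal J^N(M_1/k)\to\mathcal J^N((M_1/I^KM_1)/k)$). (2) If $\operatorname{ann}(M_1)=I$, there is some $K\in\mathbb N$ such that the image of $\widetilde D$ is a submodule annihilated by $I^K$.
   Context: For a ring homomorphism $k\to A$ and an $A$-module $M$, $I_{A/k}=\ker(A\otimes_kA\to A)$ and $\mathcal J^N(M/k)=(A\otimes_kM)/I_{A/k}^{N+1}(A\otimes_kM)$; "$A$-linear" refers to the $A$-module structure of $\mathcal J^N(M/k)$ via the first factor $a\mapsto a\otimes1$. *)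

theory Defs
  imports Main "HOL.Modules" "HOL-Library.Poly_Mapping"
begin

definition lspan :: "('a::comm_ring_1 \<Rightarrow> 'b::ab_group_add \<Rightarrow> 'b) \<Rightarrow> 'b set \<Rightarrow> 'b set" where
  "lspan s S = {(\<Sum>v\<in>t. s (r v) v) | t r. finite t \<and> t \<subseteq> S}"

definition is_ideal :: "'a::comm_ring_1 set \<Rightarrow> bool" where
  "is_ideal I \<longleftrightarrow> 0 \<in> I \<and> (\<forall>x\<in>I. \<forall>y\<in>I. x + y \<in> I) \<and> (\<forall>r. \<forall>x\<in>I. r * x \<in> I)"

definition noetherian_ring :: "'a::comm_ring_1 itself \<Rightarrow> bool" where
  "noetherian_ring _ \<longleftrightarrow>
     (\<forall>I::'a set. is_ideal I \<longrightarrow> (\<exists>S. finite S \<and> S \<subseteq> I \<and> I = lspan (*) S))"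

definition ring_hom_fun :: "('k::comm_ring_1 \<Rightarrow> 'a::comm_ring_1) \<Rightarrow> bool" where
  "ring_hom_fun f \<longleftrightarrow> f 1 = 1 \<and> (\<forall>x y. f (x + y) = f x + f y) \<and> (\<forall>x y. f (x * y) = f x * f y)"

definition fin_gen_module :: "('a::comm_ring_1 \<Rightarrow> 'm::ab_group_add \<Rightarrow> 'm) \<Rightarrow> bool" where
  "fin_gen_module s \<longleftrightarrow> (\<exists>S. finite S \<and> lspan s S = UNIV)"

definition ann :: "('a::comm_ring_1 \<Rightarrow> 'm::ab_group_add \<Rightarrow> 'm) \<Rightarrow> 'a set" where
  "ann s = {a. \<forall>m. s a m = 0}"

definition ideal_pow :: "'a::comm_ring_1 set \<Rightarrow> nat \<Rightarrow> 'a set" where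
  "ideal_pow I K = lspan (*) {prod_list xs | xs. length xs = K \<and> set xs \<subseteq> I}"

definition ideal_smult :: "('a::comm_ring_1 \<Rightarrow> 'm::ab_group_add \<Rightarrow> 'm) \<Rightarrow> 'a set \<Rightarrow> 'm set" where
  "ideal_smult s J = lspan s {s a m | a m. a \<in> J}"

definition coset :: "'m::ab_group_add set \<Rightarrow> 'm \<Rightarrow> 'm set" where
  "coset L m = {m + l | l. l \<in> L}"

definition qcarrier :: "'m::ab_group_add set \<Rightarrow> 'm set set" where
  "qcarrier L = {coset L m | m. True}"

definition qplus :: "'m::ab_group_add set \<Rightarrow> 'm set \<Rightarrow> 'm set" where
  "qplus X Y = {x + y | x y. x \<in> X \<and> y \<in> Y}"

definition qscale :: "('a \<Rightarrow> 'm::ab_group_add \<Rightarrow> 'm) \<Rightarrow> 'm set \<Rightarrow> 'a \<Rightarrow> 'm set \<Rightarrow> 'm set" where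
  "qscale s L a X = {s a x + l | x l. x \<in> X \<and> l \<in> L}"

text \<open>A module is given by a carrier C, an addition pl and a scalar multiplication sc by A.
  The free abelian group on A \<times> C is represented by finitely supported int-valued functions on pairs
  restricted to supports in A \<times> C.\<close>

inductive_set zspan :: "('b \<Rightarrow>\<^sub>0 int) set \<Rightarrow> ('b \<Rightarrow>\<^sub>0 int) set" for X where
  zspan_zero: "0 \<in> zspan X"
| zspan_gen: "x \<in> X \<Longrightarrow> x \<in> zspan X"
| zspan_diff: "x \<in> zspan X \<Longrightarrow> y \<in> zspan X \<Longrightarrow> x - y \<in> zspan X"

definition free_on :: "'m set \<Rightarrow> (('a \<times> 'm) \<Rightarrow>\<^sub>0 int) set" where
  "free_on C = {u. Poly_Mapping.keys u \<subseteq> UNIV \<times> C}"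

text \<open>Relations defining A \<otimes>_k M as a quotient of the free abelian group on A \<times> M.\<close>
definition tens_rel :: "('k \<Rightarrow> 'a::comm_ring_1) \<Rightarrow> 'm set \<Rightarrow> ('m \<Rightarrow> 'm \<Rightarrow> 'm)
    \<Rightarrow> ('a \<Rightarrow> 'm \<Rightarrow> 'm) \<Rightarrow> (('a \<times> 'm) \<Rightarrow>\<^sub>0 int) set" where
  "tens_rel \<phi> C pl sc =
     {frag_of (a + a', m) - frag_of (a, m) - frag_of (a', m) | a a' m. m \<in> C}
   \<union> {frag_of (a, pl m m') - frag_of (a, m) - frag_of (a, m') | a m m'. m \<in> C \<and> m' \<in> C}
   \<union> {frag_of (a * \<phi> c, m) - frag_of (a, sc (\<phi> c) m) | a c m. m \<in> C}"

text \<open>Action of (a lift of) an element of A \<otimes>_k A on (a lift of) an element of A \<otimes>_k M: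
  (a \<otimes> b)(x \<otimes> m) = ax \<otimes> bm.\<close>
definition tact :: "('a::comm_ring_1 \<Rightarrow> 'm \<Rightarrow> 'm) \<Rightarrow> (('a \<times> 'a) \<Rightarrow>\<^sub>0 int)
    \<Rightarrow> (('a \<times> 'm) \<Rightarrow>\<^sub>0 int) \<Rightarrow> (('a \<times> 'm) \<Rightarrow>\<^sub>0 int)" where
  "tact sc t u = frag_extend (\<lambda>(a, b). frag_extend (\<lambda>(x, m). frag_of (a * x, sc b m)) u) t"

text \<open>Preimage in the free group on A \<times> A of I_{A/k} = ker(A \<otimes>_k A \<rightarrow> A).\<close>
definition diag_ker :: "(('a::comm_ring_1 \<times> 'a) \<Rightarrow>\<^sub>0 int) set" where
  "diag_ker = {t. (\<Sum>p\<in>Poly_Mapping.keys t. of_int (Poly_Mapping.lookup t p) * (fst p * snd p)) = 0}"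

text \<open>Preimage in the free group on A \<times> M of I_{A/k}^{N+1} (A \<otimes>_k M); the quotient by it is J^N(M/k).\<close>
definition jet_ker :: "('k \<Rightarrow> 'a::comm_ring_1) \<Rightarrow> 'm set \<Rightarrow> ('m \<Rightarrow> 'm \<Rightarrow> 'm)
    \<Rightarrow> ('a \<Rightarrow> 'm \<Rightarrow> 'm) \<Rightarrow> nat \<Rightarrow> (('a \<times> 'm) \<Rightarrow>\<^sub>0 int) set" where
  "jet_ker \<phi> C pl sc N = zspan (tens_rel \<phi> C pl sc \<union>
     {List.foldr (tact sc) ts y | ts y. length ts = Suc N \<and> set ts \<subseteq> diag_ker \<and> y \<in> free_on C})"

text \<open>A-module structure on A \<otimes>_k M (and J^N(M/k)) via the first factor.\<close>
definition aact :: "('a::comm_ring_1 \<Rightarrow> 'm \<Rightarrow> 'm) \<Rightarrow> 'a \<Rightarrow> (('a \<times> 'm) \<Rightarrow>\<^sub>0 int) \<Rightarrow> (('a \<times> 'm) \<Rightarrow>\<^sub>0 int)" where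
  "aact sc a u = tact sc (frag_of (a, 1)) u"

text \<open>An A-linear map J^N(M/k) \<rightarrow> M2, represented by its composite with the projection
  from the free group on A \<times> C: additive, A-linear, vanishing on the kernel.\<close>
definition jet_lin :: "('k \<Rightarrow> 'a::comm_ring_1) \<Rightarrow> 'm set \<Rightarrow> ('m \<Rightarrow> 'm \<Rightarrow> 'm)
    \<Rightarrow> ('a \<Rightarrow> 'm \<Rightarrow> 'm) \<Rightarrow> nat \<Rightarrow> ('a \<Rightarrow> 'n::ab_group_add \<Rightarrow> 'n)
    \<Rightarrow> ((('a \<times> 'm) \<Rightarrow>\<^sub>0 int) \<Rightarrow> 'n) \<Rightarrow> bool" where
  "jet_lin \<phi> C pl sc N s2 D \<longleftrightarrow>
     (\<forall>u\<in>free_on C. \<forall>v\<in>free_on C. D (u + v) = D u + D v)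
   \<and> (\<forall>u\<in>jet_ker \<phi> C pl sc N. D u = 0)
   \<and> (\<forall>a. \<forall>u\<in>free_on C. D (aact sc a u) = s2 a (D u))"

definition qproj :: "'m::ab_group_add set \<Rightarrow> (('a \<times> 'm) \<Rightarrow>\<^sub>0 int) \<Rightarrow> (('a \<times> 'm set) \<Rightarrow>\<^sub>0 int)" where
  "qproj L u = frag_extend (\<lambda>(x, m). frag_of (x, coset L m)) u"

end

theory Submission
  imports Defs
begin

(* For a in A the element diag_diff a = a \<otimes> 1 - 1 \<otimes> a lies in I_{A/k}, so any product of N + 1
   of them acting on A \<otimes>_k M1 lands in the kernel of the projection to J^N(M1/k), where D vanishes.
   Expanding (a_1 \<otimes> 1 - 1 \<otimes> a_1) ... (a_{N+1} \<otimes> 1 - 1 \<otimes> a_{N+1}) (x \<otimes> m):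
   if all a_i annihilate M2, A-linearity of D kills every term carrying some a_i in the first factor,
   leaving D (x \<otimes> a_1 ... a_{N+1} m) = 0, so D vanishes on A \<otimes> I^{N+1} M1 and descends to the quotient;
   if all a_i annihilate M1, only a_1 ... a_{N+1} x \<otimes> m survives, so a_1 ... a_{N+1} kills the image of D.
   Hence K = N + 1 works in both parts, without using noetherianity or finite generation. *)

lemma lspan_induct [consumes 1, case_names zero add scale]:
  assumes "x \<in> lspan s S" and "P 0" and "\<And>x y. P x \<Longrightarrow> P y \<Longrightarrow> P (x + y)"
    and "\<And>r v. v \<in> S \<Longrightarrow> P (s r v)"
  shows "P x"
proof -
  have "P (\<Sum>v\<in>t. s (r v) v)" if "finite t" "t \<subseteq> S" for t r
    using that by (induction t rule: finite_induct) (auto intro: assms(2-4))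
  then show ?thesis
    using assms(1) unfolding lspan_def by blast
qed

lemma lspan_eq_span: "module s \<Longrightarrow> lspan s S = module.span s S"
  by (simp add: lspan_def module.span_explicit)

lemma ideal_smult_subspace: "module s \<Longrightarrow> module.subspace s (ideal_smult s J)"
  by (simp add: ideal_smult_def lspan_eq_span module.subspace_span)

lemma frag_extend_diff_fun:
  "frag_extend (\<lambda>p. f p - g p) t = frag_extend f t - frag_extend g t"
  using subset_UNIV
  by (induction t rule: frag_induction) (auto simp: frag_extend_diff algebra_simps)

lemma tact_frag_of: "tact sc (frag_of (a, b)) (frag_of (x, m)) = frag_of (a * x, sc b m)"
  by (simp add: tact_def)

lemma tact_diff_right: "tact sc t (u - v) = tact sc t u - tact sc t v"
  by (simp add: tact_def frag_extend_diff case_prod_unfold frag_extend_diff_fun)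

lemma tact_diff_left: "tact sc (t - t') u = tact sc t u - tact sc t' u"
  by (simp add: tact_def frag_extend_diff)

lemma tact_zero_right: "tact sc t 0 = 0"
  by (metis diff_self tact_diff_right)

lemma tact_zero_left: "tact sc 0 u = 0"
  by (simp add: tact_def)

lemma foldr_tact_diff: "foldr (tact sc) ts (u - v) = foldr (tact sc) ts u - foldr (tact sc) ts v"
  by (induction ts) (simp_all add: tact_diff_right)

lemma jet_ker_zero: "0 \<in> jet_ker \<phi> C pl sc N"
  unfolding jet_ker_def by (rule zspan_zero)

lemma jet_ker_diff: "u \<in> jet_ker \<phi> C pl sc N \<Longrightarrow> v \<in> jet_ker \<phi> C pl sc N \<Longrightarrow> u - v \<in> jet_ker \<phi> C pl sc N"
  unfolding jet_ker_def by (rule zspan_diff)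

lemma tens_rel_in_jet_ker: "u \<in> tens_rel \<phi> C pl sc \<Longrightarrow> u \<in> jet_ker \<phi> C pl sc N"
  unfolding jet_ker_def by (rule zspan_gen) blast

lemma foldr_tact_in_jet_ker:
  "length ts = Suc N \<Longrightarrow> set ts \<subseteq> diag_ker \<Longrightarrow> y \<in> free_on C
    \<Longrightarrow> foldr (tact sc) ts y \<in> jet_ker \<phi> C pl sc N"
  unfolding jet_ker_def by (rule zspan_gen) blast

definition diag_diff :: "'a::comm_ring_1 \<Rightarrow> ('a \<times> 'a) \<Rightarrow>\<^sub>0 int" where
  "diag_diff a = frag_of (a, 1) - frag_of (1, a)"

lemma diag_diff_in_diag_ker: "diag_diff a \<in> diag_ker"
proof (cases "a = 1")
  case True
  then show ?thesis by (simp add: diag_diff_def diag_ker_def)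
next
  case False
  then have "Poly_Mapping.keys (diag_diff a) = {(a, 1), (1, a)}"
    by (auto simp: diag_diff_def in_keys_iff lookup_minus split: if_splits)
  with False show ?thesis
    by (simp add: diag_ker_def diag_diff_def lookup_minus)
qed

lemma tact_diag_diff:
  "module s \<Longrightarrow> tact s (diag_diff a) (frag_of (x, m)) = frag_of (a * x, m) - frag_of (x, s a m)"
  by (simp add: diag_diff_def tact_diff_left tact_frag_of module.scale_one)

lemma foldr_diag_diff_in_jet_ker:
  "length as = Suc N \<Longrightarrow> foldr (tact s) (map diag_diff as) y \<in> jet_ker \<phi> UNIV (+) s N"
  by (rule foldr_tact_in_jet_ker) (auto simp: diag_diff_in_diag_ker free_on_def)

definition coset_rep :: "'m::ab_group_add set \<Rightarrow> 'm set \<Rightarrow> 'm" where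
  "coset_rep L X = (SOME m. X = coset L m)"

(* A non-canonical lift along the choice of coset representatives; D \<circ> qlift L is nevertheless
   well defined on J^N((M1/L)/k) because D vanishes on A \<otimes> L (see D_qlift_qproj). *)
definition qlift :: "'m::ab_group_add set \<Rightarrow> (('a \<times> 'm set) \<Rightarrow>\<^sub>0 int) \<Rightarrow> ('a \<times> 'm) \<Rightarrow>\<^sub>0 int" where
  "qlift L v = frag_extend (\<lambda>(x, X). frag_of (x, coset_rep L X)) v"

lemma coset_coset_rep: "coset L (coset_rep L (coset L m)) = coset L m"
  unfolding coset_rep_def by (rule someI_ex[where P = "\<lambda>m'. coset L m = coset L m'", symmetric]) blast

lemma qproj_frag_of: "qproj L (frag_of (x, m)) = frag_of (x, coset L m)"
  by (simp add: qproj_def)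

lemma qproj_diff: "qproj L (u - v) = qproj L u - qproj L v"
  by (simp add: qproj_def frag_extend_diff)

lemma qlift_add: "qlift L (u + v) = qlift L u + qlift L v"
  by (simp add: qlift_def frag_extend_add)

lemma qproj_qlift:
  assumes "y \<in> free_on (qcarrier L)"
  shows "qproj L (qlift L y) = y"
proof -
  have "qproj L (qlift L y) = frag_extend (\<lambda>(x, X). frag_of (x, coset L (coset_rep L X))) y"
    unfolding qlift_def qproj_def
    using frag_extend_compose[of "\<lambda>(x, m). frag_of (x, coset L m)" "\<lambda>(x, X). (x, coset_rep L X)" y]
    by (simp add: o_def case_prod_unfold)
  also have "\<dots> = frag_extend frag_of y"
  proof (rule frag_extend_eq)
    fix p assume "p \<in> Poly_Mapping.keys y"
    then obtain x m where "p = (x, coset L m)"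
      using assms unfolding free_on_def qcarrier_def by blast
    then show "(\<lambda>(x, X). frag_of (x, coset L (coset_rep L X))) p = frag_of p"
      by (simp add: coset_coset_rep)
  qed
  finally show ?thesis
    by (simp flip: frag_expansion)
qed

lemma qlift_qproj: "qlift L (qproj L w) = frag_extend (\<lambda>(x, m). frag_of (x, coset_rep L (coset L m))) w"
  unfolding qlift_def qproj_def
  using frag_extend_compose[of "\<lambda>(x, X). frag_of (x, coset_rep L X)" "\<lambda>(x, m). (x, coset L m)" w]
  by (simp add: o_def case_prod_unfold)

locale submodule = module s for s :: "'a::comm_ring_1 \<Rightarrow> 'm::ab_group_add \<Rightarrow> 'm" +
  fixes L :: "'m set"
  assumes subspace: "subspace L"
begin

lemma coset_self: "m \<in> coset L m"
  unfolding coset_def using subspace_0[OF subspace] by force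

lemma coset_eqD: "coset L m = coset L m' \<Longrightarrow> \<exists>l\<in>L. m = m' + l"
  using coset_self[of m] unfolding coset_def by auto

lemma qplus_coset: "qplus (coset L m) (coset L m') = coset L (m + m')"
proof (rule set_eqI)
  fix z
  have "z \<in> coset L (m + m')" if "z = m + l + (m' + l')" "l \<in> L" "l' \<in> L" for l l'
    unfolding coset_def using that subspace_add[OF subspace, of l l']
    by (auto intro!: exI[of _ "l + l'"] simp: algebra_simps)
  moreover have "z \<in> qplus (coset L m) (coset L m')" if "z = m + m' + l" "l \<in> L" for l
  proof -
    have "z = (m + l) + (m' + 0)"
      using that by (simp add: algebra_simps)
    then show ?thesis
      unfolding qplus_def coset_def using that subspace_0[OF subspace] by blast
  qed
  ultimately show "z \<in> qplus (coset L m) (coset L m') \<longleftrightarrow> z \<in> coset L (m + m')"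
    unfolding qplus_def coset_def by blast
qed

lemma qscale_coset: "qscale s L r (coset L m) = coset L (s r m)"
proof (rule set_eqI)
  fix z
  have "z \<in> coset L (s r m)" if "z = s r (m + l) + l'" "l \<in> L" "l' \<in> L" for l l'
    unfolding coset_def using that subspace_add[OF subspace subspace_scale[OF subspace that(2)] that(3)]
    by (auto intro!: exI[of _ "s r l + l'"] simp: scale_right_distrib add.assoc)
  moreover have "z \<in> qscale s L r (coset L m)" if "z = s r m + l" "l \<in> L" for l
    unfolding qscale_def using that coset_self[of m] by blast
  ultimately show "z \<in> qscale s L r (coset L m) \<longleftrightarrow> z \<in> coset L (s r m)"
    unfolding qscale_def coset_def by blast
qed

lemma qproj_tact: "qproj L (tact s t u) = tact (qscale s L) t (qproj L u)"
proof -
  have frag_of_case: "qproj L (tact s (frag_of (a, b)) u) = tact (qscale s L) (frag_of (a, b)) (qproj L u)"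
    for a b
    using subset_UNIV
  proof (induction u rule: frag_induction)
    case zero
    then show ?case by (simp add: tact_zero_right qproj_def)
  next
    case (one q)
    then show ?case
      by (cases q) (simp add: tact_frag_of qproj_frag_of qscale_coset)
  next
    case (diff u v)
    then show ?case by (simp add: tact_diff_right qproj_diff)
  qed
  show ?thesis
    using subset_UNIV
  proof (induction t rule: frag_induction)
    case zero
    then show ?case by (simp add: tact_zero_left qproj_def)
  next
    case (one p)
    then show ?case by (cases p) (simp only: frag_of_case)
  next
    case (diff t t')
    then show ?case by (simp add: tact_diff_left qproj_diff)
  qed
qed

lemma qproj_foldr_tact: "qproj L (foldr (tact s) ts u) = foldr (tact (qscale s L)) ts (qproj L u)"
  by (induction ts) (simp_all add: qproj_tact)

lemma tens_rel_qcarrier: "tens_rel \<phi> (qcarrier L) qplus (qscale s L) \<subseteq> qproj L ` tens_rel \<phi> UNIV (+) s"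
proof
  fix g assume "g \<in> tens_rel \<phi> (qcarrier L) qplus (qscale s L)"
  then consider
      (add_left) a a' m where
        "g = frag_of (a + a', coset L m) - frag_of (a, coset L m) - frag_of (a', coset L m)"
    | (add_right) a m m' where
        "g = frag_of (a, qplus (coset L m) (coset L m')) - frag_of (a, coset L m) - frag_of (a, coset L m')"
    | (scalar) a c m where
        "g = frag_of (a * \<phi> c, coset L m) - frag_of (a, qscale s L (\<phi> c) (coset L m))"
    unfolding tens_rel_def qcarrier_def by blast
  then show "g \<in> qproj L ` tens_rel \<phi> UNIV (+) s"
  proof cases
    case add_left
    then have "g = qproj L (frag_of (a + a', m) - frag_of (a, m) - frag_of (a', m))"
      by (simp add: qproj_diff qproj_frag_of)
    then show ?thesis unfolding tens_rel_def by blast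
  next
    case add_right
    then have "g = qproj L (frag_of (a, m + m') - frag_of (a, m) - frag_of (a, m'))"
      by (simp add: qproj_diff qproj_frag_of qplus_coset)
    then show ?thesis unfolding tens_rel_def by blast
  next
    case scalar
    then have "g = qproj L (frag_of (a * \<phi> c, m) - frag_of (a, s (\<phi> c) m))"
      by (simp add: qproj_diff qproj_frag_of qscale_coset)
    then show ?thesis unfolding tens_rel_def by blast
  qed
qed

lemma jet_ker_qcarrier:
  "jet_ker \<phi> (qcarrier L) qplus (qscale s L) N \<subseteq> qproj L ` jet_ker \<phi> UNIV (+) s N"
proof
  fix g assume "g \<in> jet_ker \<phi> (qcarrier L) qplus (qscale s L) N"
  then show "g \<in> qproj L ` jet_ker \<phi> UNIV (+) s N"
    unfolding jet_ker_def
  proof (induction rule: zspan.induct)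
    case zspan_zero
    have "0 \<in> qproj L ` jet_ker \<phi> UNIV (+) s N"
      using jet_ker_zero by (rule rev_image_eqI) (simp add: qproj_def)
    then show ?case
      unfolding jet_ker_def .
  next
    case (zspan_gen g)
    then consider "g \<in> tens_rel \<phi> (qcarrier L) qplus (qscale s L)"
      | ts y where "g = foldr (tact (qscale s L)) ts y" "length ts = Suc N" "set ts \<subseteq> diag_ker"
          "y \<in> free_on (qcarrier L)"
      by blast
    then have "\<exists>h \<in> jet_ker \<phi> UNIV (+) s N. g = qproj L h"
    proof cases
      case 1
      then show ?thesis
        using tens_rel_qcarrier tens_rel_in_jet_ker by blast
    next
      case 2
      then have "g = qproj L (foldr (tact s) ts (qlift L y))"
        by (simp add: qproj_foldr_tact qproj_qlift)
      moreover have "foldr (tact s) ts (qlift L y) \<in> jet_ker \<phi> UNIV (+) s N"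
        using 2 by (intro foldr_tact_in_jet_ker) (simp_all add: free_on_def)
      ultimately show ?thesis
        by blast
    qed
    then show ?case
      unfolding jet_ker_def by blast
  next
    case (zspan_diff g g')
    then obtain h h' where "h \<in> jet_ker \<phi> UNIV (+) s N" "h' \<in> jet_ker \<phi> UNIV (+) s N"
      "g = qproj L h" "g' = qproj L h'"
      unfolding jet_ker_def by blast
    then have "h - h' \<in> jet_ker \<phi> UNIV (+) s N" "g - g' = qproj L (h - h')"
      by (simp_all add: jet_ker_diff qproj_diff)
    then show ?case
      unfolding jet_ker_def by blast
  qed
qed

end

locale jet_linear_map = M1: module s1 + M2: module s2
  for s1 :: "'a::comm_ring_1 \<Rightarrow> 'm1::ab_group_add \<Rightarrow> 'm1"
    and s2 :: "'a \<Rightarrow> 'm2::ab_group_add \<Rightarrow> 'm2" +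
  fixes \<phi> :: "'k \<Rightarrow> 'a" and N :: nat and D :: "(('a \<times> 'm1) \<Rightarrow>\<^sub>0 int) \<Rightarrow> 'm2"
  assumes jet_lin: "jet_lin \<phi> UNIV (+) s1 N s2 D"
begin

sublocale D: additive D
  using jet_lin by unfold_locales (simp add: jet_lin_def free_on_def)

lemma D_jet_ker: "u \<in> jet_ker \<phi> UNIV (+) s1 N \<Longrightarrow> D u = 0"
  using jet_lin by (simp add: jet_lin_def)

lemma D_aact: "D (aact s1 a u) = s2 a (D u)"
  using jet_lin by (simp add: jet_lin_def free_on_def)

lemma D_frag_of_scale: "D (frag_of (x, m)) = s2 x (D (frag_of (1, m)))"
  using D_aact[of x "frag_of (1, m)"] by (simp add: aact_def tact_frag_of)

lemma D_frag_of_add: "D (frag_of (x, m + m')) = D (frag_of (x, m)) + D (frag_of (x, m'))"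
proof -
  have "frag_of (x, m + m') - frag_of (x, m) - frag_of (x, m') \<in> jet_ker \<phi> UNIV (+) s1 N"
    by (rule tens_rel_in_jet_ker) (unfold tens_rel_def, blast)
  from D_jet_ker[OF this] show ?thesis
    by (simp add: D.diff diff_eq_eq add.commute)
qed

lemma D_frag_of_zero: "D (frag_of (x, 0)) = 0"
  using D_frag_of_add[of x 0 0] by simp

lemma D_foldr_diag_diff_ann_target:
  assumes "set as \<subseteq> ann s2"
  shows "D (foldr (tact s1) (map diag_diff as) (frag_of (x, m)))
           = s2 ((- 1) ^ length as) (D (frag_of (x, s1 (prod_list as) m)))"
  using assms
proof (induction as arbitrary: x m rule: rev_induct)
  case Nil
  then show ?case by simp
next
  case (snoc a as)
  have "D (frag_of (a * x, s1 (prod_list as) m)) = 0"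
    using snoc.prems by (subst D_frag_of_scale) (simp add: ann_def flip: M2.scale_scale)
  then have "D (foldr (tact s1) (map diag_diff (as @ [a])) (frag_of (x, m)))
      = - s2 ((- 1) ^ length as) (D (frag_of (x, s1 (prod_list as * a) m)))"
    using snoc by (simp add: tact_diag_diff M1.module_axioms foldr_tact_diff D.diff)
  then show ?case
    by (simp add: M2.scale_minus_left)
qed

lemma D_foldr_diag_diff_ann_source:
  assumes "set as \<subseteq> ann s1"
  shows "D (foldr (tact s1) (map diag_diff as) (frag_of (x, m))) = D (frag_of (prod_list as * x, m))"
  using assms
proof (induction as arbitrary: x m rule: rev_induct)
  case Nil
  then show ?case by simp
next
  case (snoc a as)
  then have "s1 a m = 0"
    by (auto simp: ann_def)
  with snoc show ?case
    by (simp add: tact_diag_diff M1.module_axioms foldr_tact_diff D.diff D_frag_of_zero mult.assoc)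
qed

lemma D_frag_of_prod_ann_target:
  assumes "length as = Suc N" and "set as \<subseteq> ann s2"
  shows "D (frag_of (x, s1 (prod_list as) m)) = 0"
proof -
  let ?v = "D (frag_of (x, s1 (prod_list as) m))" and ?\<epsilon> = "(- 1 :: 'a) ^ length as"
  have "s2 ?\<epsilon> ?v = 0"
    using D_foldr_diag_diff_ann_target[OF assms(2)] D_jet_ker[OF foldr_diag_diff_in_jet_ker[OF assms(1)]]
    by simp
  moreover have "s2 ?\<epsilon> (s2 ?\<epsilon> ?v) = ?v"
    by (simp flip: power_mult_distrib)
  ultimately show ?thesis
    by (metis M2.scale_zero_right)
qed

lemma D_frag_of_ideal_pow_ann_target:
  assumes "a \<in> ideal_pow (ann s2) (Suc N)"
  shows "D (frag_of (x, s1 a m)) = 0"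
proof -
  have "\<forall>x m. D (frag_of (x, s1 a m)) = 0"
    using assms unfolding ideal_pow_def
  proof (induction rule: lspan_induct)
    case zero
    then show ?case by (simp add: D_frag_of_zero)
  next
    case (add a b)
    then show ?case by (simp add: M1.scale_left_distrib D_frag_of_add)
  next
    case (scale r v)
    then obtain as where "v = prod_list as" "length as = Suc N" "set as \<subseteq> ann s2"
      by blast
    then show ?case
      by (simp add: mult.commute[of r] D_frag_of_prod_ann_target flip: M1.scale_scale)
  qed
  then show ?thesis by blast
qed

lemma D_frag_of_ideal_smult_ann_target:
  assumes "l \<in> ideal_smult s1 (ideal_pow (ann s2) (Suc N))"
  shows "D (frag_of (x, l)) = 0"
proof -
  have "\<forall>x. D (frag_of (x, l)) = 0"
    using assms unfolding ideal_smult_def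
  proof (induction rule: lspan_induct)
    case zero
    then show ?case by (simp add: D_frag_of_zero)
  next
    case (add l l')
    then show ?case by (simp add: D_frag_of_add)
  next
    case (scale r v)
    then obtain a m where "v = s1 a m" "a \<in> ideal_pow (ann s2) (Suc N)"
      by blast
    then show ?case
      by (simp add: M1.scale_left_commute[of r a] D_frag_of_ideal_pow_ann_target del: M1.scale_scale)
  qed
  then show ?thesis by blast
qed

lemma scale_prod_ann_source_D:
  assumes "length as = Suc N" and "set as \<subseteq> ann s1"
  shows "s2 (prod_list as) (D u) = 0"
  using subset_UNIV
proof (induction u rule: frag_induction)
  case zero
  then show ?case by (simp add: D.zero)
next
  case (one p)
  obtain x m where p: "p = (x, m)" by force
  have "s2 (prod_list as) (D (frag_of p)) = D (frag_of (prod_list as * x, m))"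
    by (simp add: p aact_def tact_frag_of flip: D_aact)
  also have "\<dots> = 0"
    using D_foldr_diag_diff_ann_source[OF assms(2)] D_jet_ker[OF foldr_diag_diff_in_jet_ker[OF assms(1)]]
    by simp
  finally show ?case .
next
  case (diff u v)
  then show ?case by (simp add: D.diff M2.scale_right_diff_distrib)
qed

lemma scale_ideal_pow_ann_source_D:
  assumes "a \<in> ideal_pow (ann s1) (Suc N)"
  shows "s2 a (D u) = 0"
proof -
  have "\<forall>u. s2 a (D u) = 0"
    using assms unfolding ideal_pow_def
  proof (induction rule: lspan_induct)
    case zero
    then show ?case by simp
  next
    case (add a b)
    then show ?case by (simp add: M2.scale_left_distrib)
  next
    case (scale r v)
    then show ?case
      using scale_prod_ann_source_D by (auto simp flip: M2.scale_scale)
  qed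
  then show ?thesis by blast
qed

context
  fixes L :: "'m1 set"
  assumes L_subspace: "M1.subspace L" and D_vanish: "\<And>x l. l \<in> L \<Longrightarrow> D (frag_of (x, l)) = 0"
begin

interpretation L: submodule s1 L
  by (rule submodule.intro[OF M1.module_axioms]) (simp add: submodule_axioms_def L_subspace)

lemma D_qlift_qproj: "D (qlift L (qproj L u)) = D u"
proof -
  have rep: "D (frag_of (x, coset_rep L (coset L m))) = D (frag_of (x, m))" for x m
  proof -
    obtain l where "l \<in> L" "coset_rep L (coset L m) = m + l"
      using L.coset_eqD[OF coset_coset_rep] by blast
    then show ?thesis
      using D_vanish by (simp add: D_frag_of_add)
  qed
  show ?thesis
    unfolding qlift_qproj using subset_UNIV
  proof (induction u rule: frag_induction)
    case zero
    then show ?case by simp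
  next
    case (one p)
    then show ?case by (cases p) (simp add: rep)
  next
    case (diff u v)
    then show ?case by (simp add: frag_extend_diff D.diff)
  qed
qed

lemma jet_lin_qlift: "jet_lin \<phi> (qcarrier L) qplus (qscale s1 L) N s2 (D \<circ> qlift L)"
  unfolding jet_lin_def
proof (intro conjI ballI allI)
  fix u v :: "('a \<times> 'm1 set) \<Rightarrow>\<^sub>0 int"
  show "(D \<circ> qlift L) (u + v) = (D \<circ> qlift L) u + (D \<circ> qlift L) v"
    by (simp add: qlift_add D.add)
next
  fix u assume "u \<in> jet_ker \<phi> (qcarrier L) qplus (qscale s1 L) N"
  then obtain h where "h \<in> jet_ker \<phi> UNIV (+) s1 N" "u = qproj L h"
    using L.jet_ker_qcarrier by blast
  then show "(D \<circ> qlift L) u = 0"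
    by (simp add: D_qlift_qproj D_jet_ker)
next
  fix a and u :: "('a \<times> 'm1 set) \<Rightarrow>\<^sub>0 int"
  assume "u \<in> free_on (qcarrier L)"
  then have "aact (qscale s1 L) a u = qproj L (aact s1 a (qlift L u))"
    by (simp add: aact_def L.qproj_tact qproj_qlift)
  then show "(D \<circ> qlift L) (aact (qscale s1 L) a u) = s2 a ((D \<circ> qlift L) u)"
    by (simp add: D_qlift_qproj D_aact)
qed

end

end

theorem mainTheorem20:
  fixes \<phi> :: "'k::comm_ring_1 \<Rightarrow> 'a::comm_ring_1"
    and s1 :: "'a \<Rightarrow> 'm1::ab_group_add \<Rightarrow> 'm1"
    and s2 :: "'a \<Rightarrow> 'm2::ab_group_add \<Rightarrow> 'm2"
    and N :: nat
    and I :: "'a set"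
    and D :: "(('a \<times> 'm1) \<Rightarrow>\<^sub>0 int) \<Rightarrow> 'm2"
  assumes "noetherian_ring TYPE('k)" and "noetherian_ring TYPE('a)"
    and "ring_hom_fun \<phi>"
    and "Modules.module s1" and "Modules.module s2"
    and "fin_gen_module s1" and "fin_gen_module s2"
    and "jet_lin \<phi> UNIV (+) s1 N s2 D"
  shows "(ann s2 = I \<longrightarrow>
            (\<exists>K\<ge>1. \<exists>D'. jet_lin \<phi> (qcarrier (ideal_smult s1 (ideal_pow I K))) qplus
                          (qscale s1 (ideal_smult s1 (ideal_pow I K))) N s2 D'
                    \<and> (\<forall>u. D u = D' (qproj (ideal_smult s1 (ideal_pow I K)) u))))
       \<and> (ann s1 = I \<longrightarrow>
            (\<exists>K\<ge>1. \<forall>a\<in>ideal_pow I K. \<forall>u. s2 a (D u) = 0))"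
proof -
  interpret jet_linear_map s1 s2 \<phi> N D
    using assms(4,5,8) by (rule jet_linear_map.intro[OF _ _ jet_linear_map_axioms.intro])
  let ?L = "ideal_smult s1 (ideal_pow (ann s2) (Suc N))"
  have "M1.subspace ?L"
    by (rule ideal_smult_subspace[OF M1.module_axioms])
  then have "jet_lin \<phi> (qcarrier ?L) qplus (qscale s1 ?L) N s2 (D \<circ> qlift ?L)"
    and "\<forall>u. D u = (D \<circ> qlift ?L) (qproj ?L u)"
    using D_frag_of_ideal_smult_ann_target jet_lin_qlift D_qlift_qproj by auto
  moreover have "\<forall>a\<in>ideal_pow (ann s1) (Suc N). \<forall>u. s2 a (D u) = 0"
    using scale_ideal_pow_ann_source_D by blast
  ultimately show ?thesis
    by (intro conjI impI exI[of _ "Suc N"]) auto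
qed

end
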